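(* Let $P=\{\mathbf{x}^{(\mathrm{p})}_i\}_{i=1}^{n_{\mathrm p}}$ and $U=\{\mathbf{x}^{(\mathrm{u})}_i\}_{i=1}^{n_{\mathrm u}}$ be finite sets of points in $\mathbb{R}^d$ (positive and unlabeled examples), let $\pi\in(0,1)$, $w_{\mathrm p}=\pi/n_{\mathrm p}$ and $w_{\mathrm u}=1/n_{\mathrm u}$. Let $P'\subseteq P$ and $U'\subseteq U$, not both empty. For a loss $\ell:\mathbb{R}\times\{-1,+1\}\to\mathbb{R}$ define $$\hat R_{\mathrm{uPU}}(v;P',U')=\sum_{\mathbf{x}\in P'}w_{\mathrm p}\,\ell(v,+1)-\sum_{\mathbf{x}\in P'}w_{\mathrm p}\,\ell(v,-1)+\sum_{\mathbf{x}\in U'}w_{\mathrm u}\,\ell(v,-1),$$ and $\hat R^*_{\mathrm{uPU}}(P',U')=\inf_{v\in\mathbb{R}}\hat R_{\mathrm{uPU}}(v;P',U')\in[-\infty,\infty)$. Let $W_{\mathrm p}=|P'|w_{\mathrm p}$, $W_{\mathrm n}=|U'|w_{\mathrm u}-|P'|w_{\mathrm p}$, and $v^*=\frac{W_{\mathrm p}}{W_{\mathrm p}+W_{\mathrm n}}$, where $v^*=+\infty$ if $W_{\mathrm p}+W_{\mathrm n}=0$. (a) For the quadratic loss $\ell(v,y)=(1-vy)^2$: $$\hat R^*_{\mathrm{uPU}}(P',U')=\begin{cases}-\infty,& v^*=+\infty,\\ 4(W_{\mathrm p}+W_{\mathrm n})\,v^*(1-v^* ),&\text{otherwise.}\end{cases}$$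 (b) For the logistic loss $\ell(v,y)=\ln(1+\exp(-vy))$: $$\hat R^*_{\mathrm{uPU}}(P',U')=\begin{cases}(W_{\mathrm p}+W_{\mathrm n})\bigl(-v^*\ln v^*-(1-v^* )\ln(1-v^* )\bigr),& 0<v^*<1,\\ 0,& v^*\in\{0,1\},\\ -\infty,& v^*>1.\end{cases}$$
   Context: This is the unbiased PU (uPU) risk estimate restricted to a node of a decision tree containing positive examples $P'$ and unlabeled examples $U'$, when a constant score $v$ is predicted at that node. *)

theory Defs
  imports "HOL-Analysis.Analysis"
begin

text \<open>Losses l(v,y), with the label y in {-1,+1} represented as a real number.\<close>
definition sq_loss :: "real \<Rightarrow> real \<Rightarrow> real" where
  "sq_loss v y = (1 - v * y)^2"

definition logistic_loss :: "real \<Rightarrow> real \<Rightarrow> real" where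
  "logistic_loss v y = ln (1 + exp (- (v * y)))"

definition w_p :: "real \<Rightarrow> 'a set \<Rightarrow> real" where
  "w_p prior P = prior / real (card P)"

definition w_u :: "'a set \<Rightarrow> real" where
  "w_u U = 1 / real (card U)"

definition uPU_risk ::
  "(real \<Rightarrow> real \<Rightarrow> real) \<Rightarrow> real \<Rightarrow> 'a set \<Rightarrow> 'a set \<Rightarrow> 'a set \<Rightarrow> 'a set \<Rightarrow> real \<Rightarrow> real" where
  "uPU_risk l prior P U P' U' v =
     (\<Sum>x\<in>P'. w_p prior P * l v 1) - (\<Sum>x\<in>P'. w_p prior P * l v (-1))
     + (\<Sum>x\<in>U'. w_u U * l v (-1))"

definition uPU_opt ::
  "(real \<Rightarrow> real \<Rightarrow> real) \<Rightarrow> real \<Rightarrow> 'a set \<Rightarrow> 'a set \<Rightarrow> 'a set \<Rightarrow> 'a set \<Rightarrow> ereal" where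
  "uPU_opt l prior P U P' U' = (INF v::real. ereal (uPU_risk l prior P U P' U' v))"

definition W_p :: "real \<Rightarrow> 'a set \<Rightarrow> 'a set \<Rightarrow> real" where
  "W_p prior P P' = real (card P') * w_p prior P"

definition W_n :: "real \<Rightarrow> 'a set \<Rightarrow> 'a set \<Rightarrow> 'a set \<Rightarrow> 'a set \<Rightarrow> real" where
  "W_n prior P U P' U' = real (card U') * w_u U - real (card P') * w_p prior P"

definition v_star :: "real \<Rightarrow> 'a set \<Rightarrow> 'a set \<Rightarrow> 'a set \<Rightarrow> 'a set \<Rightarrow> ereal" where
  "v_star prior P U P' U' =
     (if W_p prior P P' + W_n prior P U P' U' = 0 then \<infinity>
      else ereal (W_p prior P P' / (W_p prior P P' + W_n prior P U P' U')))"

end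

theory Submission
  imports Defs
begin

text \<open>At a constant score v the risk is W_p l(v,+1) + W_n l(v,-1), with W_p \<ge> 0 and
W_p + W_n = |U'| w_u \<ge> 0, so only a one-dimensional minimisation remains. For the quadratic
loss it is solved by completing the square. For the logistic loss the objective is
(W_p + W_n)(ln (1 + e^v) - t v) with t = v^*, and concavity of ln shows that the infimum of
ln (1 + e^v) - t v is the binary entropy of t for 0 < t < 1, approached but not attained at the
endpoints t \<in> {0, 1}, while for t > 1 the linear term wins and the risk is unbounded below.\<close>

definition binary_entropy :: "real \<Rightarrow> real" where
  "binary_entropy t = - t * ln t - (1 - t) * ln (1 - t)"

lemma INF_ereal_eq_MInfty:
  assumes "\<And>B. \<exists>x. f x \<le> B"
  shows "(INF x. ereal (f x)) = -\<infinity>"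
proof (rule ereal_bot)
  fix B
  obtain x where "f x \<le> B" using assms by blast
  then show "(INF x. ereal (f x)) \<le> ereal B"
    by (metis INF_lower2 UNIV_I ereal_less_eq(3))
qed

lemma INF_ereal_eqI:
  assumes "\<And>x. m \<le> f x" and "\<And>e. 0 < e \<Longrightarrow> \<exists>x. f x \<le> m + e"
  shows "(INF x. ereal (f x)) = ereal m"
proof (rule antisym)
  show "(INF x. ereal (f x)) \<le> ereal m"
  proof (rule ereal_le_epsilon2)
    fix e :: real assume "0 < e"
    then obtain x where "f x \<le> m + e" using assms(2) by blast
    then show "(INF x. ereal (f x)) \<le> ereal m + ereal e"
      by (metis INF_lower2 UNIV_I ereal_less_eq(3) plus_ereal.simps(1))
  qed
  show "ereal m \<le> (INF x. ereal (f x))"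
    using assms(1) by (simp add: INF_greatest)
qed

lemma INF_linear_MInfty:
  fixes a :: real
  assumes "a \<noteq> 0"
  shows "(INF v. ereal (a * v)) = -\<infinity>"
proof (rule INF_ereal_eq_MInfty)
  show "\<exists>v. a * v \<le> B" for B
    using assms by (intro exI[of _ "- \<bar>B\<bar> / a"]) simp
qed

lemma sq_loss_weighted:
  "p * sq_loss v 1 + n * sq_loss v (-1) = (p + n) * (1 + v)^2 - 4 * p * v"
  by (simp add: sq_loss_def power2_eq_square algebra_simps)

lemma INF_quadratic:
  fixes a b :: real
  assumes "0 < b"
  shows "(INF v. ereal (b * (1 + v)^2 - 4 * a * v)) = ereal (4 * b * (a / b) * (1 - a / b))"
proof (rule INF_ereal_eqI)
  fix v
  have "b * (1 + v)^2 - 4 * a * v - 4 * b * (a / b) * (1 - a / b) = (b * (1 + v) - 2 * a)^2 / b"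
    using assms by (simp add: field_simps power2_eq_square)
  then show "4 * b * (a / b) * (1 - a / b) \<le> b * (1 + v)^2 - 4 * a * v"
    using assms by (metis diff_ge_0_iff_ge divide_nonneg_pos zero_le_power2)
next
  fix e :: real assume "0 < e"
  have "b * (1 + (2 * a / b - 1))^2 - 4 * a * (2 * a / b - 1) = 4 * b * (a / b) * (1 - a / b)"
    using assms by (simp add: field_simps power2_eq_square)
  then show "\<exists>v. b * (1 + v)^2 - 4 * a * v \<le> 4 * b * (a / b) * (1 - a / b) + e"
    using \<open>0 < e\<close> by (metis less_add_same_cancel1 less_eq_real_def)
qed

lemma ln_one_plus_exp_minus: "ln (1 + exp (- v)) = ln (1 + exp v) - (v :: real)"
proof -
  have "1 + exp (- v) = exp (- v) * (1 + exp v)"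
    by (simp add: distrib_left flip: exp_add)
  moreover have "0 < 1 + exp v" by (simp add: add_pos_pos)
  ultimately show ?thesis by (simp add: ln_mult)
qed

lemma logistic_loss_weighted:
  "p * logistic_loss v 1 + n * logistic_loss v (-1) = (p + n) * ln (1 + exp v) - p * v"
  by (simp add: logistic_loss_def ln_one_plus_exp_minus algebra_simps)

lemma binary_entropy_le:
  assumes "0 < t" "t < 1"
  shows "binary_entropy t \<le> ln (1 + exp v) - t * v"
proof -
  have "(1 - t) * ln (1 / (1 - t)) + t * ln (exp v / t) \<le> ln ((1 - t) * (1 / (1 - t)) + t * (exp v / t))"
    using concave_onD[OF ln_concave, of t "1 / (1 - t)" "exp v / t"] assms by simp
  then show ?thesis
    using assms by (simp add: binary_entropy_def ln_div algebra_simps)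
qed

lemma INF_logistic_entropy:
  assumes "0 < b" "0 < t" "t < 1"
  shows "(INF v. ereal (b * ln (1 + exp v) - b * t * v)) = ereal (b * binary_entropy t)"
proof (rule INF_ereal_eqI)
  fix v
  have "b * binary_entropy t \<le> b * (ln (1 + exp v) - t * v)"
    using assms by (intro mult_left_mono binary_entropy_le) auto
  then show "b * binary_entropy t \<le> b * ln (1 + exp v) - b * t * v"
    by (simp add: algebra_simps)
next
  fix e :: real assume "0 < e"
  define v where "v = ln t - ln (1 - t)"
  have "1 + exp v = 1 / (1 - t)"
    using assms by (simp add: v_def exp_diff field_simps)
  then have "b * ln (1 + exp v) - b * t * v = b * binary_entropy t"
    using assms by (simp add: ln_div v_def binary_entropy_def algebra_simps)
  then show "\<exists>v. b * ln (1 + exp v) - b * t * v \<le> b * binary_entropy t + e"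
    using \<open>0 < e\<close> by (metis less_add_same_cancel1 less_eq_real_def)
qed

lemma INF_logistic_degenerate:
  assumes "0 < b" and "a = 0 \<or> a = b"
  shows "(INF v. ereal (b * ln (1 + exp v) - a * v)) = 0"
proof -
  define s :: real where "s = (if a = 0 then 1 else -1)"
  have flip: "b * ln (1 + exp v) - a * v = b * ln (1 + exp (s * v))" for v
    using assms(2) by (auto simp: s_def ln_one_plus_exp_minus algebra_simps)
  have "(INF v. ereal (b * ln (1 + exp v) - a * v)) = ereal 0"
  proof (rule INF_ereal_eqI)
    show "0 \<le> b * ln (1 + exp v) - a * v" for v
      using assms(1) by (simp add: flip)
  next
    fix e :: real assume "0 < e"
    define v where "v = s * ln (e / b)"
    have "b * ln (1 + exp v) - a * v \<le> b * exp (s * v)"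
      unfolding flip using assms(1) by (intro mult_left_mono ln_add_one_self_le_self) auto
    also have "\<dots> = e"
      using assms(1) \<open>0 < e\<close> by (simp add: v_def s_def)
    finally show "\<exists>v. b * ln (1 + exp v) - a * v \<le> 0 + e" by auto
  qed
  then show ?thesis by (simp add: zero_ereal_def)
qed

lemma INF_logistic_MInfty:
  assumes "0 \<le> b" "b < a"
  shows "(INF v. ereal (b * ln (1 + exp v) - a * v)) = -\<infinity>"
proof (rule INF_ereal_eq_MInfty)
  fix B :: real
  define v where "v = (\<bar>B\<bar> + b) / (a - b)"
  have "0 \<le> v" using assms by (simp add: v_def)
  have "ln (1 + exp v) \<le> ln (exp (1 + v))"
  proof (subst ln_le_cancel_iff)
    have "2 * exp v \<le> exp 1 * exp v"
      using exp_ge_add_one_self[of 1] by (intro mult_right_mono) auto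
    moreover have "1 \<le> exp v" using \<open>0 \<le> v\<close> by simp
    ultimately show "1 + exp v \<le> exp (1 + v)"
      unfolding exp_add by linarith
  qed (auto simp: add_pos_pos)
  then have "b * ln (1 + exp v) - a * v \<le> b - (a - b) * v"
    using assms(1) mult_left_mono by (fastforce simp: algebra_simps)
  also have "\<dots> \<le> B"
    using assms by (simp add: v_def)
  finally show "\<exists>v. b * ln (1 + exp v) - a * v \<le> B" by blast
qed

lemma uPU_risk_eq_weighted_losses:
  "uPU_risk l prior P U P' U' v = W_p prior P P' * l v 1 + W_n prior P U P' U' * l v (-1)"
  by (simp add: uPU_risk_def W_p_def W_n_def algebra_simps)

lemma uPU_opt_sq_loss:
  "uPU_opt sq_loss prior P U P' U'
     = (INF v. ereal ((W_p prior P P' + W_n prior P U P' U') * (1 + v)^2 - 4 * W_p prior P P' * v))"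
  by (simp add: uPU_opt_def uPU_risk_eq_weighted_losses sq_loss_weighted)

lemma uPU_opt_logistic_loss:
  "uPU_opt logistic_loss prior P U P' U'
     = (INF v. ereal ((W_p prior P P' + W_n prior P U P' U') * ln (1 + exp v) - W_p prior P P' * v))"
  by (simp add: uPU_opt_def uPU_risk_eq_weighted_losses logistic_loss_weighted)

lemma W_p_plus_W_n: "W_p prior P P' + W_n prior P U P' U' = real (card U') * w_u U"
  by (simp add: W_p_def W_n_def)

lemma W_p_nonneg: "0 \<le> prior \<Longrightarrow> 0 \<le> W_p prior P P'"
  by (simp add: W_p_def w_p_def)

lemma W_p_pos_if_W_sum_eq_0:
  assumes "finite P" "finite U" "P' \<subseteq> P" "U' \<subseteq> U" "P' \<noteq> {} \<or> U' \<noteq> {}" "0 < prior"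
    and "W_p prior P P' + W_n prior P U P' U' = 0"
  shows "0 < W_p prior P P'"
proof -
  have "U' = {}"
    using assms(2,4,7) by (auto simp: W_p_plus_W_n w_u_def card_eq_0_iff dest: finite_subset)
  then have "card P' \<noteq> 0" "card P \<noteq> 0"
    using assms(1,3,5) by (auto simp: card_eq_0_iff dest: finite_subset)
  then show ?thesis
    using assms(6) by (simp add: W_p_def w_p_def)
qed

theorem proposition1:
  fixes P U P' U' :: "(real ^ 'd) set" and prior :: real
  assumes "finite P" and "finite U"
    and "P' \<subseteq> P" and "U' \<subseteq> U"
    and "P' \<noteq> {} \<or> U' \<noteq> {}"
    and "0 < prior" and "prior < 1"
  defines "Wp \<equiv> W_p prior P P'" and "Wn \<equiv> W_n prior P U P' U'"
    and "vs \<equiv> v_star prior P U P' U'"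
  shows "((vs = \<infinity> \<longrightarrow> uPU_opt sq_loss prior P U P' U' = - \<infinity>)
       \<and> (vs \<noteq> \<infinity> \<longrightarrow> uPU_opt sq_loss prior P U P' U'
              = ereal (4 * (Wp + Wn) * real_of_ereal vs * (1 - real_of_ereal vs))))
       \<and> ((0 < vs \<and> vs < 1 \<longrightarrow> uPU_opt logistic_loss prior P U P' U'
              = ereal ((Wp + Wn) * (- real_of_ereal vs * ln (real_of_ereal vs)
                         - (1 - real_of_ereal vs) * ln (1 - real_of_ereal vs))))
       \<and> (vs \<in> {0, 1} \<longrightarrow> uPU_opt logistic_loss prior P U P' U' = 0)
       \<and> (vs > 1 \<longrightarrow> uPU_opt logistic_loss prior P U P' U' = - \<infinity>))"
proof -
  define a b where "a = Wp" and "b = Wp + Wn"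
  have "0 \<le> a"
    using W_p_nonneg[of prior P P'] \<open>0 < prior\<close> by (simp add: a_def Wp_def)
  have "0 \<le> b"
    by (simp add: b_def Wp_def Wn_def W_p_plus_W_n w_u_def)
  have vs: "vs = (if b = 0 then \<infinity> else ereal (a / b))"
    by (simp add: vs_def v_star_def a_def b_def Wp_def Wn_def)
  have sq: "uPU_opt sq_loss prior P U P' U' = (INF v. ereal (b * (1 + v)^2 - 4 * a * v))"
    and lg: "uPU_opt logistic_loss prior P U P' U' = (INF v. ereal (b * ln (1 + exp v) - a * v))"
    by (simp_all add: uPU_opt_sq_loss uPU_opt_logistic_loss a_def b_def Wp_def Wn_def)
  show ?thesis
  proof (cases "b = 0")
    case True
    then have "0 < a"
      using W_p_pos_if_W_sum_eq_0[OF assms(1-6)] by (simp add: a_def b_def Wp_def Wn_def)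
    with sq lg INF_linear_MInfty[of "- 4 * a"] INF_logistic_MInfty[of 0 a] show ?thesis
      by (simp add: vs True)
  next
    case False
    with \<open>0 \<le> b\<close> have "0 < b" by simp
    define t where "t = a / b"
    have a_eq: "a = b * t" using False by (simp add: t_def)
    have "t = 0 \<or> t = 1 \<Longrightarrow> a = 0 \<or> a = b" by (auto simp: a_eq)
    moreover have "1 < t \<Longrightarrow> b < a" using \<open>0 < b\<close> by (simp add: a_eq)
    ultimately show ?thesis
      using sq lg INF_quadratic[OF \<open>0 < b\<close>, of a] INF_logistic_entropy[OF \<open>0 < b\<close>, of t]
        INF_logistic_degenerate[OF \<open>0 < b\<close>, of a] INF_logistic_MInfty[OF \<open>0 \<le> b\<close>, of a]
      by (auto simp: vs False binary_entropy_def b_def[symmetric] t_def[symmetric] a_eq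
          zero_ereal_def one_ereal_def)
  qed
qed

end
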